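(* For every $n\ge2$, the group $\mathcal{P}(\mathrm{Cr}_n)$ is isomorphic to a semidirect product $\mathbb{Z}_{2n}\rtimes\mathbb{Z}_2$ (namely the dihedral group of order $4n$).
   Context: For $n\ge2$, $\mathrm{Cr}_n$ is the poset $\{x_1,\dots,x_n,y_1,\dots,y_n\}$ whose only relations between distinct elements are $x_i<y_i$ ($1\le i\le n$), $x_{i+1}<y_i$ ($1\le i\le n-1$) and $x_1<y_n$. For a finite poset $X$ and $x<y$, $e_{xy}$ denotes the incidence-algebra basis element (indicator of $(x,y)$), and $B=\{e_{xy}:x<y\}$. A bijection $\theta:B\to B$ is proper if there is an automorphism $\lambda$ of $X$ with $\theta(e_{xy})=e_{\lambda(x)\lambda(y)}$ for all $x<y$, or an anti-automorphism (order-reversing bijection) $\lambda$ of $X$ with $\theta(e_{xy})=e_{\lambda(y)\lambda(x)}$ for all $x<y$; $\mathcal{P}(X)$ is the group (under composition) of proper bijections of $B$. *)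

theory Defs
  imports "HOL-Algebra.Group" "HOL-Library.FuncSet"
begin

text \<open>The crown poset Cr_n. Elements: (False, i) stands for x_i, (True, i) for y_i,
  with 1 \<le> i \<le> n.\<close>

definition crown_carrier :: "nat \<Rightarrow> (bool \<times> nat) set" where
  "crown_carrier n = UNIV \<times> {1..n}"

definition crown_less :: "nat \<Rightarrow> bool \<times> nat \<Rightarrow> bool \<times> nat \<Rightarrow> bool" where
  "crown_less n a b \<longleftrightarrow>
     (\<exists>i j. a = (False, j) \<and> b = (True, i) \<and> i \<in> {1..n} \<and> j \<in> {1..n} \<and>
        (j = i \<or> (i \<le> n - 1 \<and> j = i + 1) \<or> (j = 1 \<and> i = n)))"

text \<open>The basis B = {e_xy : x < y}, with e_xy identified with the pair (x, y).\<close>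
definition crown_basis :: "nat \<Rightarrow> ((bool \<times> nat) \<times> (bool \<times> nat)) set" where
  "crown_basis n = {(x, y). crown_less n x y}"

definition crown_automorphism :: "nat \<Rightarrow> (bool \<times> nat \<Rightarrow> bool \<times> nat) \<Rightarrow> bool" where
  "crown_automorphism n f \<longleftrightarrow> bij_betw f (crown_carrier n) (crown_carrier n) \<and>
     (\<forall>x\<in>crown_carrier n. \<forall>y\<in>crown_carrier n. crown_less n x y \<longleftrightarrow> crown_less n (f x) (f y))"

definition crown_anti_automorphism :: "nat \<Rightarrow> (bool \<times> nat \<Rightarrow> bool \<times> nat) \<Rightarrow> bool" where
  "crown_anti_automorphism n f \<longleftrightarrow> bij_betw f (crown_carrier n) (crown_carrier n) \<and>
     (\<forall>x\<in>crown_carrier n. \<forall>y\<in>crown_carrier n. crown_less n x y \<longleftrightarrow> crown_less n (f y) (f x))"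

definition proper_bijections ::
  "nat \<Rightarrow> (((bool \<times> nat) \<times> (bool \<times> nat)) \<Rightarrow> ((bool \<times> nat) \<times> (bool \<times> nat))) set" where
  "proper_bijections n = {\<theta>. \<theta> \<in> extensional (crown_basis n) \<and>
      bij_betw \<theta> (crown_basis n) (crown_basis n) \<and>
      ((\<exists>f. crown_automorphism n f \<and> (\<forall>(x, y)\<in>crown_basis n. \<theta> (x, y) = (f x, f y))) \<or>
       (\<exists>f. crown_anti_automorphism n f \<and> (\<forall>(x, y)\<in>crown_basis n. \<theta> (x, y) = (f y, f x))))}"

definition proper_group ::
  "nat \<Rightarrow> (((bool \<times> nat) \<times> (bool \<times> nat)) \<Rightarrow> ((bool \<times> nat) \<times> (bool \<times> nat))) monoid" where
  "proper_group n = \<lparr> carrier = proper_bijections n,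
                      mult = (\<lambda>\<theta> \<phi>. compose (crown_basis n) \<theta> \<phi>),
                      one = restrict id (crown_basis n) \<rparr>"

definition semidirect_Zm_Z2 :: "nat \<Rightarrow> (int \<times> int) monoid" where
  "semidirect_Zm_Z2 m = \<lparr> carrier = {0..<int m} \<times> {0..<2},
      mult = (\<lambda>(a, s) (b, t). ((a + (-1) ^ nat s * b) mod int m, (s + t) mod 2)),
      one = (0, 0) \<rparr>"

end

theory Submission
  imports Defs
begin

(* Numbering x_i as 2i - 2 and y_i as 2i - 1 identifies Cr_n with Z_2n in such a way that
   x < y holds exactly when x is even, y is odd and x, y are neighbours on the 2n-cycle.
   An automorphism or anti-automorphism of Cr_n is therefore a bijection of Z_2n preserving
   adjacency, i.e. a dihedral map k -> a + k or k -> a - k; conversely such a map is an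
   automorphism of Cr_n if a is even and an anti-automorphism if a is odd.  A proper bijection
   is determined by its underlying point map, because at most one of e_xy, e_yx lies in B.
   Hence sending (a, s) to the proper bijection induced by k -> a + (-1)^s k is an isomorphism
   from the semidirect product onto P(Cr_n). *)

section \<open>Adjacency-preserving maps of the cycle Z/M\<close>

definition cycle_adj :: "int \<Rightarrow> int \<Rightarrow> int \<Rightarrow> bool" where
  "cycle_adj M u v \<longleftrightarrow> (u - v) mod M = 1 \<or> (v - u) mod M = 1"

definition dihedral_map :: "int \<Rightarrow> int \<Rightarrow> int \<Rightarrow> int \<Rightarrow> int" where
  "dihedral_map M a s k = (a + (-1) ^ nat s * k) mod M"

lemma cycle_adj_sym: "cycle_adj M u v \<longleftrightarrow> cycle_adj M v u"
  unfolding cycle_adj_def by auto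

lemma cycle_adj_succ: "M > 1 \<Longrightarrow> cycle_adj M k (k + 1)"
  unfolding cycle_adj_def by simp

lemma cycle_adj_odd_diff:
  assumes "even M" "cycle_adj M u v"
  shows "odd (u - v)"
proof -
  have "odd ((u - v) mod M) \<or> odd ((v - u) mod M)"
    using assms(2) unfolding cycle_adj_def by auto
  then show ?thesis
    using assms(1) by (metis even_minus dvd_mod_iff minus_diff_eq)
qed

lemma cycle_adj_iff:
  assumes "M > 1" "u \<in> {0..<M}" "v \<in> {0..<M}"
  shows "cycle_adj M u v \<longleftrightarrow> u - v \<in> {1, 1 - M} \<or> v - u \<in> {1, 1 - M}"
proof -
  have "d mod M = 1 \<longleftrightarrow> d \<in> {1, 1 - M}" if "-M < d" "d < M" for d
  proof (cases "d \<ge> 0")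
    case False
    have "d mod M = (d + M) mod M" by simp
    also have "\<dots> = d + M" using False that by (intro mod_pos_pos_trivial) auto
    finally show ?thesis using False by auto
  qed (use assms(1) that in auto)
  then show ?thesis
    using assms unfolding cycle_adj_def by auto
qed

lemma cycle_adj_neighbour:
  assumes "cycle_adj M x w" "w \<in> {0..<M}"
  shows "w = (x + 1) mod M \<or> w = (x - 1) mod M"
proof -
  have w: "w mod M = w" using assms(2) by simp
  have "(x + (w - x) mod M) mod M = w" "(x - (x - w) mod M) mod M = w"
    using w by (simp_all add: mod_simps)
  then show ?thesis
    using assms(1) unfolding cycle_adj_def by auto
qed

lemma dihedral_map_range: "M > 0 \<Longrightarrow> dihedral_map M a s k \<in> {0..<M}"
  unfolding dihedral_map_def by simp

lemma dihedral_map_zero: "dihedral_map M a s 0 = a mod M"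
  unfolding dihedral_map_def by simp

lemma dihedral_map_compose:
  assumes "s \<in> {0, 1}" "t \<in> {0, 1}"
  shows "dihedral_map M a s (dihedral_map M b t k)
    = dihedral_map M ((a + (-1) ^ nat s * b) mod M) ((s + t) mod 2) k"
  using assms unfolding dihedral_map_def
  by (elim insertE emptyE) (simp_all add: mod_simps algebra_simps)

lemma dihedral_map_self_inverse:
  assumes "s \<in> {0, 1}" "k \<in> {0..<M}"
  shows "dihedral_map M (- ((-1) ^ nat s * a)) s (dihedral_map M a s k) = k"
  using assms unfolding dihedral_map_def
  by (elim insertE emptyE) (simp_all add: mod_simps)

lemma bij_betw_dihedral_map:
  assumes "M > 0" "s \<in> {0, 1}"
  shows "bij_betw (dihedral_map M a s) {0..<M} {0..<M}"
proof (rule bij_betw_byWitness)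
  have "a = - ((-1) ^ nat s * (- ((-1) ^ nat s * a)))"
    using assms(2) by auto
  then show "\<forall>k\<in>{0..<M}. dihedral_map M a s (dihedral_map M (- ((-1) ^ nat s * a)) s k) = k"
    using dihedral_map_self_inverse[OF assms(2), of _ M "- ((-1) ^ nat s * a)"] by metis
qed (use assms dihedral_map_range dihedral_map_self_inverse in auto)

lemma even_dihedral_map: "even M \<Longrightarrow> even (dihedral_map M a s k) \<longleftrightarrow> even (a + k)"
  unfolding dihedral_map_def by (simp add: dvd_mod_iff)

lemma cycle_adj_dihedral_map:
  assumes "s \<in> {0, 1}"
  shows "cycle_adj M (dihedral_map M a s u) (dihedral_map M a s v) \<longleftrightarrow> cycle_adj M u v"
proof -
  have "(dihedral_map M a s u - dihedral_map M a s v) mod M = ((-1) ^ nat s * (u - v)) mod M"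
    for u v
    unfolding dihedral_map_def mod_diff_eq by (simp add: right_diff_distrib)
  then show ?thesis
    using assms unfolding cycle_adj_def by (elim insertE emptyE) auto
qed

lemma dihedral_map_neighbours:
  assumes "s \<in> {0, 1}"
  shows "{(dihedral_map M a s j + 1) mod M, (dihedral_map M a s j - 1) mod M}
    = {dihedral_map M a s (j + 1), dihedral_map M a s (j - 1)}"
  using assms unfolding dihedral_map_def
  by (elim insertE emptyE) (auto simp: mod_simps algebra_simps)

lemma cycle_adj_preserving_next:
  assumes "F ` {0..<M} \<subseteq> {0..<M}"
    and "\<And>u v. u \<in> {0..<M} \<Longrightarrow> v \<in> {0..<M} \<Longrightarrow> cycle_adj M u v \<Longrightarrow>
      cycle_adj M (F u) (F v)"
    and "0 \<le> k" "k + 1 < M"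
  shows "F (k + 1) \<in> {(F k + 1) mod M, (F k - 1) mod M}"
proof -
  have "cycle_adj M (F k) (F (k + 1))"
    using assms(2)[of k "k + 1"] cycle_adj_succ[of M k] assms(3,4) by simp
  moreover have "k + 1 \<in> {0..<M}"
    using assms(3,4) by simp
  then have "F (k + 1) \<in> {0..<M}"
    using assms(1) by blast
  ultimately show ?thesis
    using cycle_adj_neighbour by blast
qed

lemma cycle_adj_preserving_eq_dihedral_map:
  assumes "M \<ge> 2"
    and maps: "F ` {0..<M} \<subseteq> {0..<M}"
    and inj: "inj_on F {0..<M}"
    and adj: "\<And>u v. u \<in> {0..<M} \<Longrightarrow> v \<in> {0..<M} \<Longrightarrow> cycle_adj M u v \<Longrightarrow>
      cycle_adj M (F u) (F v)"
    and "s \<in> {0, 1}" "F 0 = dihedral_map M a s 0" "F 1 = dihedral_map M a s 1"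
    and "k \<in> {0..<M}"
  shows "F k = dihedral_map M a s k"
proof -
  \<comment> \<open>\<open>F (k + 2)\<close> is a neighbour of \<open>F (k + 1)\<close> and, by injectivity, not \<open>F k\<close>\<close>
  have along: "k + 1 < M \<longrightarrow> F k = dihedral_map M a s k \<and> F (k + 1) = dihedral_map M a s (k + 1)"
    if "0 \<le> k" for k
    using that
  proof (induction k rule: int_ge_induct)
    case base
    then show ?case using assms(6,7) by simp
  next
    case (step k)
    show ?case
    proof
      assume k: "k + 1 + 1 < M"
      then have IH: "F k = dihedral_map M a s k" "F (k + 1) = dihedral_map M a s (k + 1)"
        using step by auto
      have "F (k + 1 + 1) \<in> {dihedral_map M a s (k + 1 + 1), dihedral_map M a s k}"
        using cycle_adj_preserving_next[OF maps adj, of "k + 1"] dihedral_map_neighbours[OF assms(5), of M a "k + 1"]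
          IH(2) step k
        by simp
      moreover have "F (k + 1 + 1) \<noteq> F k"
        using inj_onD[OF inj, of "k + 1 + 1" k] step k by auto
      ultimately show "F (k + 1) = dihedral_map M a s (k + 1) \<and>
        F (k + 1 + 1) = dihedral_map M a s (k + 1 + 1)"
        using IH by auto
    qed
  qed
  show ?thesis
  proof (cases "k + 1 < M")
    case False
    then have "k = M - 2 + 1"
      using assms(8) by simp
    then show ?thesis using along[of "M - 2"] assms(1) by simp
  qed (use along assms(8) in simp)
qed

lemma cycle_adj_preserving_is_dihedral:
  assumes "M \<ge> 2"
    and maps: "F ` {0..<M} \<subseteq> {0..<M}"
    and inj: "inj_on F {0..<M}"
    and adj: "\<And>u v. u \<in> {0..<M} \<Longrightarrow> v \<in> {0..<M} \<Longrightarrow> cycle_adj M u v \<Longrightarrow>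
      cycle_adj M (F u) (F v)"
  obtains a s where "a \<in> {0..<M}" "s \<in> {0, 1}"
    "\<And>k. k \<in> {0..<M} \<Longrightarrow> F k = dihedral_map M a s k"
proof -
  define a where "a = F 0"
  have "0 \<in> {0..<M}"
    using assms(1) by simp
  then have "a \<in> {0..<M}"
    using maps unfolding a_def by blast
  then have a: "a \<in> {0..<M}" "F 0 = dihedral_map M a s 0" for s
    unfolding a_def dihedral_map_zero by auto
  obtain s where s: "s \<in> {0, 1}" "F 1 = dihedral_map M a s 1"
  proof -
    have "dihedral_map M a 0 1 = (a + 1) mod M" "dihedral_map M a 1 1 = (a - 1) mod M"
      unfolding dihedral_map_def by simp_all
    then show ?thesis
      using that cycle_adj_preserving_next[OF maps adj, of 0] assms(1) unfolding a_def by force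
  qed
  show ?thesis
    using that a s cycle_adj_preserving_eq_dihedral_map[OF assms(1) maps inj adj s(1) a(2) s(2)] by blast
qed

lemma dihedral_map_determined_by_edges:
  assumes "M \<ge> 3" "a \<in> {0..<M}" "b \<in> {0..<M}" "s \<in> {0, 1}" "t \<in> {0, 1}"
    and edge01: "{dihedral_map M a s 0, dihedral_map M a s 1} = {dihedral_map M b t 0, dihedral_map M b t 1}"
    and edge12: "{dihedral_map M a s 1, dihedral_map M a s 2} = {dihedral_map M b t 1, dihedral_map M b t 2}"
  shows "a = b \<and> s = t"
proof -
  have ends_differ: "dihedral_map M c r 0 \<noteq> dihedral_map M c r 2" if "r \<in> {0, 1}" for c r
  proof
    assume "dihedral_map M c r 0 = dihedral_map M c r 2"
    moreover have "inj_on (dihedral_map M c r) {0..<M}"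
      using bij_betw_dihedral_map[of M r c] assms(1) that by (simp add: bij_betw_def)
    ultimately show False
      using assms(1) by (auto dest: inj_onD)
  qed
  \<comment> \<open>vertex 1 is the common endpoint of the edges \<open>{0, 1}\<close> and \<open>{1, 2}\<close>\<close>
  have vertex1: "dihedral_map M a s 1 = dihedral_map M b t 1"
    using ends_differ[OF assms(4), of a] ends_differ[OF assms(5), of b] edge01 edge12
    by (auto simp: doubleton_eq_iff)
  then have vertex0: "dihedral_map M a s 0 = dihedral_map M b t 0"
    using edge01 by (auto simp: doubleton_eq_iff)
  have a_eq_b: "a = b"
    using vertex0 assms(2,3) by (simp add: dihedral_map_zero)
  have "dihedral_map M a 0 1 \<noteq> dihedral_map M a 1 1"
  proof
    assume "dihedral_map M a 0 1 = dihedral_map M a 1 1"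
    then have "M dvd 2"
      unfolding dihedral_map_def mod_eq_dvd_iff by simp
    then show False
      using assms(1) zdvd_imp_le[of M 2] by simp
  qed
  then have "s = t"
    using vertex1 a_eq_b assms(4,5) by auto
  with a_eq_b show ?thesis ..
qed

lemma carrier_semidirect_Zm_Z2: "carrier (semidirect_Zm_Z2 m) = {0..<int m} \<times> {0, 1}"
  unfolding semidirect_Zm_Z2_def by auto

lemma mult_semidirect_Zm_Z2:
  "(a, s) \<otimes>\<^bsub>semidirect_Zm_Z2 m\<^esub> (b, t) = ((a + (-1) ^ nat s * b) mod int m, (s + t) mod 2)"
  unfolding semidirect_Zm_Z2_def by simp

lemma group_semidirect_Zm_Z2:
  assumes "m > 0"
  shows "group (semidirect_Zm_Z2 m)"
proof (rule groupI)
  fix x y z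
  assume "x \<in> carrier (semidirect_Zm_Z2 m)" "y \<in> carrier (semidirect_Zm_Z2 m)"
    "z \<in> carrier (semidirect_Zm_Z2 m)"
  then obtain a s b t c u where "x = (a, s)" "y = (b, t)" "z = (c, u)" "s \<in> {0, 1}" "t \<in> {0, 1}"
    unfolding carrier_semidirect_Zm_Z2 by blast
  moreover have "(-1 :: int) ^ nat ((s + t) mod 2) = (-1) ^ nat s * (-1) ^ nat t"
    if "s \<in> {0, 1}" "t \<in> {0, 1}" for s t :: int
    using that by auto
  moreover have "(p + q * (r mod int m)) mod int m = (p + q * r) mod int m" for p q r :: int
    by (metis mod_add_right_eq mod_mult_right_eq)
  ultimately show "x \<otimes>\<^bsub>semidirect_Zm_Z2 m\<^esub> y \<otimes>\<^bsub>semidirect_Zm_Z2 m\<^esub> z =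
    x \<otimes>\<^bsub>semidirect_Zm_Z2 m\<^esub> (y \<otimes>\<^bsub>semidirect_Zm_Z2 m\<^esub> z)"
    by (simp add: mult_semidirect_Zm_Z2 mod_simps algebra_simps)
next
  fix x
  assume "x \<in> carrier (semidirect_Zm_Z2 m)"
  then obtain a s where "x = (a, s)" "a \<in> {0..<int m}" "s \<in> {0, 1}"
    unfolding carrier_semidirect_Zm_Z2 by blast
  then show "\<exists>y\<in>carrier (semidirect_Zm_Z2 m). y \<otimes>\<^bsub>semidirect_Zm_Z2 m\<^esub> x = \<one>\<^bsub>semidirect_Zm_Z2 m\<^esub>"
    using assms unfolding carrier_semidirect_Zm_Z2
    by (intro bexI[of _ "((- ((-1) ^ nat s * a)) mod int m, s)"])
      (auto simp: mult_semidirect_Zm_Z2 semidirect_Zm_Z2_def mod_simps)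
qed (use assms in \<open>auto simp: semidirect_Zm_Z2_def\<close>)

section \<open>The crown as a cycle of length 2n\<close>

text \<open>\<open>crown_point\<close> sends \<open>2i - 2\<close> to \<open>x\<^sub>i\<close> and \<open>2i - 1\<close> to \<open>y\<^sub>i\<close>;
  \<open>crown_index\<close> is its inverse.\<close>

definition crown_point :: "int \<Rightarrow> bool \<times> nat" where
  "crown_point k = (odd k, nat (k div 2) + 1)"

definition crown_index :: "bool \<times> nat \<Rightarrow> int" where
  "crown_index p = 2 * int (snd p) - (if fst p then 1 else 2)"

lemma crown_index_point: "0 \<le> k \<Longrightarrow> crown_index (crown_point k) = k"
  unfolding crown_index_def crown_point_def by (auto; presburger)

lemma crown_point_index: "p \<in> crown_carrier n \<Longrightarrow> crown_point (crown_index p) = p"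
  unfolding crown_index_def crown_point_def crown_carrier_def by (cases p) auto

lemma crown_index_range: "p \<in> crown_carrier n \<Longrightarrow> crown_index p \<in> {0..<2 * int n}"
  unfolding crown_index_def crown_carrier_def by auto

lemma crown_point_range: "k \<in> {0..<2 * int n} \<Longrightarrow> crown_point k \<in> crown_carrier n"
  unfolding crown_point_def crown_carrier_def by auto

lemma bij_betw_crown_point: "bij_betw crown_point {0..<2 * int n} (crown_carrier n)"
  by (rule bij_betw_byWitness[where f' = crown_index])
    (use crown_index_range crown_point_range in \<open>auto simp: crown_index_point crown_point_index\<close>)

lemma bij_betw_crown_index: "bij_betw crown_index (crown_carrier n) {0..<2 * int n}"
  by (rule bij_betw_byWitness[where f' = crown_point])
    (use crown_index_range crown_point_range in \<open>auto simp: crown_index_point crown_point_index\<close>)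

lemma crown_less_carrier: "crown_less n x y \<Longrightarrow> x \<in> crown_carrier n \<and> y \<in> crown_carrier n"
  unfolding crown_less_def crown_carrier_def by auto

lemma crown_basis_subset: "crown_basis n \<subseteq> crown_carrier n \<times> crown_carrier n"
  unfolding crown_basis_def using crown_less_carrier by blast

lemma crown_less_asym: "crown_less n x y \<Longrightarrow> \<not> crown_less n y x"
  unfolding crown_less_def by auto

lemma crown_less_point_iff:
  assumes "u \<in> {0..<2 * int n}" "v \<in> {0..<2 * int n}"
  shows "crown_less n (crown_point u) (crown_point v) \<longleftrightarrow>
    even u \<and> odd v \<and> cycle_adj (2 * int n) u v"
proof (cases "even u \<and> odd v")
  case True
  then obtain j i where u: "u = 2 * j" and v: "v = 2 * i + 1"
    by (meson evenE oddE)
  have ij: "0 \<le> j" "j < int n" "0 \<le> i" "i < int n"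
    using assms u v by auto
  have M: "2 * int n > 1"
    using ij by simp
  have "cycle_adj (2 * int n) u v \<longleftrightarrow> j = i \<or> j = i + 1 \<or> (j = 0 \<and> i = int n - 1)"
    using cycle_adj_iff[OF M assms] ij u v by auto
  moreover have "crown_less n (crown_point u) (crown_point v) \<longleftrightarrow>
      j = i \<or> j = i + 1 \<or> (j = 0 \<and> i = int n - 1)"
    unfolding crown_less_def crown_point_def u v using ij by auto
  ultimately show ?thesis
    using True by simp
qed (auto simp: crown_less_def crown_point_def)

lemma crown_less_iff_index:
  assumes "x \<in> crown_carrier n" "y \<in> crown_carrier n"
  shows "crown_less n x y \<longleftrightarrow>
    even (crown_index x) \<and> odd (crown_index y) \<and> cycle_adj (2 * int n) (crown_index x) (crown_index y)"
  using crown_less_point_iff[OF crown_index_range[OF assms(1)] crown_index_range[OF assms(2)]]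
  by (simp add: crown_point_index[OF assms(1)] crown_point_index[OF assms(2)])

definition crown_dihedral :: "nat \<Rightarrow> int \<Rightarrow> int \<Rightarrow> bool \<times> nat \<Rightarrow> bool \<times> nat" where
  "crown_dihedral n a s = crown_point \<circ> dihedral_map (2 * int n) a s \<circ> crown_index"

lemma crown_index_dihedral:
  assumes "p \<in> crown_carrier n"
  shows "crown_index (crown_dihedral n a s p) = dihedral_map (2 * int n) a s (crown_index p)"
proof -
  have "n > 0"
    using assms unfolding crown_carrier_def by auto
  then show ?thesis
    unfolding crown_dihedral_def using dihedral_map_range crown_index_point by simp
qed

lemma bij_betw_crown_dihedral:
  assumes "n > 0" "s \<in> {0, 1}"
  shows "bij_betw (crown_dihedral n a s) (crown_carrier n) (crown_carrier n)"
  unfolding crown_dihedral_def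
  using bij_betw_crown_index bij_betw_dihedral_map[of "2 * int n" s a] bij_betw_crown_point assms
  by (auto intro: bij_betw_trans)

lemma crown_dihedral_automorphism:
  assumes "n > 0" "s \<in> {0, 1}" "even a"
  shows "crown_automorphism n (crown_dihedral n a s)"
  unfolding crown_automorphism_def
proof (intro conjI ballI)
  show "bij_betw (crown_dihedral n a s) (crown_carrier n) (crown_carrier n)"
    using bij_betw_crown_dihedral assms by simp
  then have "crown_dihedral n a s x \<in> crown_carrier n" if "x \<in> crown_carrier n" for x
    using that by (rule bij_betw_apply)
  then show "crown_less n x y \<longleftrightarrow> crown_less n (crown_dihedral n a s x) (crown_dihedral n a s y)"
    if "x \<in> crown_carrier n" "y \<in> crown_carrier n" for x y
    using that assms(3)
    by (simp add: crown_less_iff_index crown_index_dihedral even_dihedral_map cycle_adj_dihedral_map[OF assms(2)])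
qed

lemma crown_dihedral_anti_automorphism:
  assumes "n > 0" "s \<in> {0, 1}" "odd a"
  shows "crown_anti_automorphism n (crown_dihedral n a s)"
  unfolding crown_anti_automorphism_def
proof (intro conjI ballI)
  show "bij_betw (crown_dihedral n a s) (crown_carrier n) (crown_carrier n)"
    using bij_betw_crown_dihedral assms by simp
  then have "crown_dihedral n a s x \<in> crown_carrier n" if "x \<in> crown_carrier n" for x
    using that by (rule bij_betw_apply)
  then show "crown_less n x y \<longleftrightarrow> crown_less n (crown_dihedral n a s y) (crown_dihedral n a s x)"
    if "x \<in> crown_carrier n" "y \<in> crown_carrier n" for x y
    using that assms(3)
    by (auto simp: crown_less_iff_index crown_index_dihedral even_dihedral_map
        cycle_adj_dihedral_map[OF assms(2)] cycle_adj_sym)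
qed

lemma crown_dihedral_compose:
  assumes "s \<in> {0, 1}" "t \<in> {0, 1}" "p \<in> crown_carrier n"
  shows "crown_dihedral n a s (crown_dihedral n b t p)
    = crown_dihedral n ((a + (-1) ^ nat s * b) mod (2 * int n)) ((s + t) mod 2) p"
  using crown_index_dihedral[OF assms(3), of b t]
  by (simp add: crown_dihedral_def dihedral_map_compose[OF assms(1,2)])

section \<open>Proper bijections and their point maps\<close>

lemma bij_betw_map_prod_relation:
  assumes "bij_betw f A B" "R \<subseteq> A \<times> A" "S \<subseteq> B \<times> B"
    and "\<And>x y. x \<in> A \<Longrightarrow> y \<in> A \<Longrightarrow> (x, y) \<in> R \<longleftrightarrow> (f x, f y) \<in> S"
  shows "bij_betw (map_prod f f) R S"
proof (rule bij_betw_subset[OF bij_betw_map_prod[OF assms(1) assms(1)] assms(2)])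
  show "map_prod f f ` R = S"
  proof
    show "map_prod f f ` R \<subseteq> S"
      using assms(2,4) by auto
    show "S \<subseteq> map_prod f f ` R"
    proof
      fix p assume "p \<in> S"
      moreover obtain x y where "x \<in> A" "y \<in> A" "p = (f x, f y)"
        using \<open>p \<in> S\<close> assms(1,3) unfolding bij_betw_def by blast
      ultimately show "p \<in> map_prod f f ` R"
        using assms(4) by force
    qed
  qed
qed

definition induced_by ::
  "nat \<Rightarrow> ((bool \<times> nat) \<times> (bool \<times> nat) \<Rightarrow> (bool \<times> nat) \<times> (bool \<times> nat)) \<Rightarrow>
    (bool \<times> nat \<Rightarrow> bool \<times> nat) \<Rightarrow> bool" where
  "induced_by n \<theta> f \<longleftrightarrow> (\<forall>(x, y)\<in>crown_basis n.
     \<theta> (x, y) \<in> crown_basis n \<and> \<theta> (x, y) \<in> {(f x, f y), (f y, f x)})"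

lemma induced_by_unique:
  assumes "\<theta> \<in> extensional (crown_basis n)" "\<phi> \<in> extensional (crown_basis n)"
    and "induced_by n \<theta> f" "induced_by n \<phi> f"
  shows "\<theta> = \<phi>"
proof (rule extensionalityI[OF assms(1,2)])
  fix e assume "e \<in> crown_basis n"
  then obtain x y where xy: "e = (x, y)" "(x, y) \<in> crown_basis n"
    by (cases e) auto
  have "\<theta> e \<in> crown_basis n" "\<phi> e \<in> crown_basis n"
    "\<theta> e \<in> {(f x, f y), (f y, f x)}" "\<phi> e \<in> {(f x, f y), (f y, f x)}"
    using assms(3,4) xy unfolding induced_by_def by auto
  moreover have "(f x, f y) \<notin> crown_basis n \<or> (f y, f x) \<notin> crown_basis n"
    using crown_less_asym unfolding crown_basis_def by auto
  ultimately show "\<theta> e = \<phi> e"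
    by auto
qed

lemma induced_by_cong:
  assumes "\<And>x. x \<in> crown_carrier n \<Longrightarrow> f x = g x"
  shows "induced_by n \<theta> f \<longleftrightarrow> induced_by n \<theta> g"
  using assms crown_basis_subset unfolding induced_by_def by fastforce

lemma induced_by_compose:
  assumes "induced_by n \<theta> f" "induced_by n \<phi> g"
  shows "induced_by n (compose (crown_basis n) \<theta> \<phi>) (f \<circ> g)"
  using assms unfolding induced_by_def compose_def by fastforce

lemma induced_by_apply:
  assumes "induced_by n \<theta> f" "crown_less n x y"
  shows "crown_less n (fst (\<theta> (x, y))) (snd (\<theta> (x, y)))"
    and "\<theta> (x, y) = (f x, f y) \<or> \<theta> (x, y) = (f y, f x)"
proof -
  have "(x, y) \<in> crown_basis n"
    using assms(2) unfolding crown_basis_def by simp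
  then have "\<theta> (x, y) \<in> crown_basis n \<and> \<theta> (x, y) \<in> {(f x, f y), (f y, f x)}"
    using assms(1) unfolding induced_by_def by (auto dest!: bspec[of _ _ "(x, y)"] case_prodD)
  then show "crown_less n (fst (\<theta> (x, y))) (snd (\<theta> (x, y)))"
    and "\<theta> (x, y) = (f x, f y) \<or> \<theta> (x, y) = (f y, f x)"
    by (auto simp: crown_basis_def split: prod.splits)
qed

lemma induced_by_crown_less:
  assumes "induced_by n \<theta> f" "crown_less n x y"
  shows "crown_less n (f x) (f y) \<or> crown_less n (f y) (f x)"
  using induced_by_apply[OF assms] by auto

lemma induced_by_edge:
  assumes "induced_by n \<theta> f" "crown_less n x y"
  shows "{fst (\<theta> (x, y)), snd (\<theta> (x, y))} = {f x, f y}"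
  using induced_by_apply(2)[OF assms] by auto

lemma proper_bijection_induced_by:
  assumes "\<theta> \<in> proper_bijections n"
  obtains f where "bij_betw f (crown_carrier n) (crown_carrier n)" "induced_by n \<theta> f"
proof -
  have maps: "\<theta> e \<in> crown_basis n" if "e \<in> crown_basis n" for e
    using assms that unfolding proper_bijections_def by (auto dest: bij_betw_apply)
  from assms consider
      f where "crown_automorphism n f" "\<forall>(x, y)\<in>crown_basis n. \<theta> (x, y) = (f x, f y)"
    | f where "crown_anti_automorphism n f" "\<forall>(x, y)\<in>crown_basis n. \<theta> (x, y) = (f y, f x)"
    unfolding proper_bijections_def by blast
  then show ?thesis
  proof cases
    case (1 f)
    then have "induced_by n \<theta> f"
      using maps unfolding induced_by_def by fastforce
    with 1(1) show ?thesis
      using that unfolding crown_automorphism_def by blast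
  next
    case (2 f)
    then have "induced_by n \<theta> f"
      using maps unfolding induced_by_def by fastforce
    with 2(1) show ?thesis
      using that unfolding crown_anti_automorphism_def by blast
  qed
qed

definition proper_dihedral ::
  "nat \<Rightarrow> int \<Rightarrow> int \<Rightarrow> (bool \<times> nat) \<times> (bool \<times> nat) \<Rightarrow> (bool \<times> nat) \<times> (bool \<times> nat)" where
  "proper_dihedral n a s = restrict (\<lambda>(x, y).
     if even a then (crown_dihedral n a s x, crown_dihedral n a s y)
     else (crown_dihedral n a s y, crown_dihedral n a s x)) (crown_basis n)"

lemma proper_dihedral_apply:
  assumes "crown_less n x y"
  shows "proper_dihedral n a s (x, y) = (if even a then (crown_dihedral n a s x, crown_dihedral n a s y)
    else (crown_dihedral n a s y, crown_dihedral n a s x))"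
  using assms unfolding proper_dihedral_def crown_basis_def by simp

lemma induced_by_proper_dihedral:
  assumes "n > 0" "s \<in> {0, 1}"
  shows "induced_by n (proper_dihedral n a s) (crown_dihedral n a s)"
  unfolding induced_by_def
proof (intro ballI, clarify)
  fix x y assume "(x, y) \<in> crown_basis n"
  then have xy: "crown_less n x y" "x \<in> crown_carrier n" "y \<in> crown_carrier n"
    using crown_less_carrier unfolding crown_basis_def by auto
  show "proper_dihedral n a s (x, y) \<in> crown_basis n \<and>
    proper_dihedral n a s (x, y) \<in> {(crown_dihedral n a s x, crown_dihedral n a s y),
      (crown_dihedral n a s y, crown_dihedral n a s x)}"
  proof (cases "even a")
    case True
    then show ?thesis
      using crown_dihedral_automorphism[OF assms True] xy
      by (simp add: proper_dihedral_apply crown_automorphism_def crown_basis_def)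
  next
    case False
    then show ?thesis
      using crown_dihedral_anti_automorphism[OF assms False] xy
      by (simp add: proper_dihedral_apply crown_anti_automorphism_def crown_basis_def)
  qed
qed

lemma proper_dihedral_in_proper_bijections:
  assumes "n > 0" "s \<in> {0, 1}"
  shows "proper_dihedral n a s \<in> proper_bijections n"
proof (cases "even a")
  case True
  let ?g = "crown_dihedral n a s"
  have auto: "crown_automorphism n ?g"
    using crown_dihedral_automorphism[OF assms True] .
  then have "bij_betw (map_prod ?g ?g) (crown_basis n) (crown_basis n)"
    by (intro bij_betw_map_prod_relation[OF _ crown_basis_subset crown_basis_subset])
      (auto simp: crown_automorphism_def crown_basis_def)
  then have "bij_betw (proper_dihedral n a s) (crown_basis n) (crown_basis n)"
    by (rule bij_betw_cong[THEN iffD1, rotated]) (auto simp: proper_dihedral_def True)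
  then show ?thesis
    using auto True unfolding proper_bijections_def proper_dihedral_def by auto
next
  case False
  let ?g = "crown_dihedral n a s"
  have anti: "crown_anti_automorphism n ?g"
    using crown_dihedral_anti_automorphism[OF assms False] .
  have "bij_betw prod.swap (crown_basis n) ((crown_basis n)\<inverse>)"
    by (rule bij_betw_byWitness[where f' = prod.swap]) auto
  moreover have "bij_betw (map_prod ?g ?g) ((crown_basis n)\<inverse>) (crown_basis n)"
    using anti crown_basis_subset
    by (intro bij_betw_map_prod_relation) (auto simp: crown_anti_automorphism_def crown_basis_def)
  ultimately have "bij_betw (map_prod ?g ?g \<circ> prod.swap) (crown_basis n) (crown_basis n)"
    by (rule bij_betw_trans)
  then have "bij_betw (proper_dihedral n a s) (crown_basis n) (crown_basis n)"
    by (rule bij_betw_cong[THEN iffD1, rotated]) (auto simp: proper_dihedral_def False)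
  then show ?thesis
    using anti False unfolding proper_bijections_def proper_dihedral_def by auto
qed

lemma proper_dihedral_mult:
  assumes "n > 0" "s \<in> {0, 1}" "t \<in> {0, 1}"
  shows "compose (crown_basis n) (proper_dihedral n a s) (proper_dihedral n b t)
    = proper_dihedral n ((a + (-1) ^ nat s * b) mod (2 * int n)) ((s + t) mod 2)"
proof (rule induced_by_unique)
  let ?c = "(a + (-1) ^ nat s * b) mod (2 * int n)" and ?u = "(s + t) mod 2"
  have "induced_by n (compose (crown_basis n) (proper_dihedral n a s) (proper_dihedral n b t))
      (crown_dihedral n a s \<circ> crown_dihedral n b t)"
    by (rule induced_by_compose[OF induced_by_proper_dihedral[OF assms(1,2)]
          induced_by_proper_dihedral[OF assms(1,3)]])
  then show "induced_by n (compose (crown_basis n) (proper_dihedral n a s) (proper_dihedral n b t))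
      (crown_dihedral n ?c ?u)"
    by (rule induced_by_cong[THEN iffD1, rotated]) (simp add: crown_dihedral_compose[OF assms(2,3)])
  have "?u \<in> {0, 1}"
    by auto
  then show "induced_by n (proper_dihedral n ?c ?u) (crown_dihedral n ?c ?u)"
    by (rule induced_by_proper_dihedral[OF assms(1)])
qed (auto simp: proper_dihedral_def compose_extensional)

lemma proper_dihedral_inject:
  assumes "n \<ge> 2" "a \<in> {0..<2 * int n}" "b \<in> {0..<2 * int n}" "s \<in> {0, 1}" "t \<in> {0, 1}"
    and eq: "proper_dihedral n a s = proper_dihedral n b t"
  shows "a = b \<and> s = t"
proof -
  let ?M = "2 * int n"
  have n: "n > 0"
    using assms(1) by simp
  have edge_images: "{dihedral_map ?M a s k, dihedral_map ?M a s 1} = {dihedral_map ?M b t k, dihedral_map ?M b t 1}"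
    if "k \<in> {0, 2}" for k
  proof -
    have k: "k \<in> {0..<?M}" "1 \<in> {0..<?M}" "even k" "cycle_adj ?M k 1"
      using that assms(1) cycle_adj_succ[of ?M 0] cycle_adj_succ[of ?M 1] cycle_adj_sym by auto
    then have less: "crown_less n (crown_point k) (crown_point 1)"
      using crown_less_point_iff by simp
    have "{crown_dihedral n a s (crown_point k), crown_dihedral n a s (crown_point 1)}
        = {crown_dihedral n b t (crown_point k), crown_dihedral n b t (crown_point 1)}"
      using induced_by_edge[OF induced_by_proper_dihedral[OF n assms(4), of a] less]
        induced_by_edge[OF induced_by_proper_dihedral[OF n assms(5), of b] less] eq
      by simp
    then have "crown_index ` {crown_dihedral n a s (crown_point k), crown_dihedral n a s (crown_point 1)}
        = crown_index ` {crown_dihedral n b t (crown_point k), crown_dihedral n b t (crown_point 1)}"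
      by simp
    then show ?thesis
      using k crown_point_range by (simp add: crown_index_dihedral crown_index_point)
  qed
  have "{dihedral_map ?M a s 1, dihedral_map ?M a s 2} = {dihedral_map ?M b t 1, dihedral_map ?M b t 2}"
    using edge_images[of 2] by (simp add: insert_commute)
  moreover have "?M \<ge> 3"
    using assms(1) by simp
  ultimately show ?thesis
    using dihedral_map_determined_by_edges assms(2-5) edge_images[of 0] by blast
qed

lemma induced_by_cycle_adj:
  assumes f: "bij_betw f (crown_carrier n) (crown_carrier n)" and ind: "induced_by n \<theta> f"
    and uv: "u \<in> {0..<2 * int n}" "v \<in> {0..<2 * int n}" "cycle_adj (2 * int n) u v"
  shows "cycle_adj (2 * int n) (crown_index (f (crown_point u))) (crown_index (f (crown_point v)))"
proof -
  have from_even: "cycle_adj (2 * int n) (crown_index (f (crown_point u))) (crown_index (f (crown_point v)))"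
    if uv: "u \<in> {0..<2 * int n}" "v \<in> {0..<2 * int n}" "cycle_adj (2 * int n) u v" and "even u" for u v
  proof -
    have "odd v"
      using cycle_adj_odd_diff[OF _ uv(3)] \<open>even u\<close> by auto
    then have "crown_less n (crown_point u) (crown_point v)"
      using crown_less_point_iff uv \<open>even u\<close> by simp
    moreover have "f (crown_point u) \<in> crown_carrier n" "f (crown_point v) \<in> crown_carrier n"
      using bij_betw_apply[OF f] crown_point_range uv by blast+
    ultimately show ?thesis
      using induced_by_crown_less[OF ind] crown_less_iff_index cycle_adj_sym by blast
  qed
  show ?thesis
  proof (cases "even u")
    case False
    then have "even v"
      using cycle_adj_odd_diff[OF _ uv(3)] by auto
    then show ?thesis
      using from_even[OF uv(2,1)] uv(3) cycle_adj_sym by blast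
  qed (use from_even uv in blast)
qed

lemma proper_bijection_is_dihedral:
  assumes "n > 0" "\<theta> \<in> proper_bijections n"
  obtains a s where "a \<in> {0..<2 * int n}" "s \<in> {0, 1}" "\<theta> = proper_dihedral n a s"
proof -
  let ?M = "2 * int n"
  obtain f where f: "bij_betw f (crown_carrier n) (crown_carrier n)" and ind: "induced_by n \<theta> f"
    using proper_bijection_induced_by[OF assms(2)] by blast
  define F where "F = crown_index \<circ> f \<circ> crown_point"
  have F_bij: "bij_betw F {0..<?M} {0..<?M}"
    unfolding F_def using bij_betw_crown_point f bij_betw_crown_index by (blast intro: bij_betw_trans)
  have F_adj: "cycle_adj ?M (F u) (F v)"
    if "u \<in> {0..<?M}" "v \<in> {0..<?M}" "cycle_adj ?M u v" for u v
    unfolding F_def using induced_by_cycle_adj[OF f ind that] by simp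
  obtain a s where as: "a \<in> {0..<?M}" "s \<in> {0, 1}"
    and F_dihedral: "\<And>k. k \<in> {0..<?M} \<Longrightarrow> F k = dihedral_map ?M a s k"
    by (rule cycle_adj_preserving_is_dihedral[of ?M F])
      (use assms(1) F_bij F_adj in \<open>auto simp: bij_betw_def\<close>)
  have "f p = crown_dihedral n a s p" if "p \<in> crown_carrier n" for p
  proof -
    have "f p = crown_point (F (crown_index p))"
      unfolding F_def using crown_point_index[OF that] bij_betw_apply[OF f that] crown_point_index by simp
    then show ?thesis
      using F_dihedral[OF crown_index_range[OF that]] unfolding crown_dihedral_def by simp
  qed
  then have "induced_by n \<theta> (crown_dihedral n a s)"
    using ind induced_by_cong by blast
  then have "\<theta> = proper_dihedral n a s"
    using induced_by_unique induced_by_proper_dihedral[OF assms(1) as(2)] assms(2)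
    unfolding proper_bijections_def proper_dihedral_def by blast
  with as that show ?thesis
    by blast
qed

lemma hom_proper_dihedral:
  assumes "n > 0"
  shows "(\<lambda>(a, s). proper_dihedral n a s) \<in> hom (semidirect_Zm_Z2 (2 * n)) (proper_group n)"
proof (rule homI)
  fix x assume "x \<in> carrier (semidirect_Zm_Z2 (2 * n))"
  then obtain a s where "x = (a, s)" "s \<in> {0, 1}"
    unfolding carrier_semidirect_Zm_Z2 by blast
  then show "(\<lambda>(a, s). proper_dihedral n a s) x \<in> carrier (proper_group n)"
    using proper_dihedral_in_proper_bijections[OF assms] unfolding proper_group_def by simp
next
  fix x y
  assume "x \<in> carrier (semidirect_Zm_Z2 (2 * n))" "y \<in> carrier (semidirect_Zm_Z2 (2 * n))"
  then obtain a s b t where xy: "x = (a, s)" "y = (b, t)" and st: "s \<in> {0, 1}" "t \<in> {0, 1}"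
    unfolding carrier_semidirect_Zm_Z2 by blast
  show "(\<lambda>(a, s). proper_dihedral n a s) (x \<otimes>\<^bsub>semidirect_Zm_Z2 (2 * n)\<^esub> y) =
    (\<lambda>(a, s). proper_dihedral n a s) x \<otimes>\<^bsub>proper_group n\<^esub> (\<lambda>(a, s). proper_dihedral n a s) y"
    using proper_dihedral_mult[OF assms st, symmetric]
    unfolding xy proper_group_def by (simp add: mult_semidirect_Zm_Z2)
qed

lemma bij_betw_proper_dihedral:
  assumes "n \<ge> 2"
  shows "bij_betw (\<lambda>(a, s). proper_dihedral n a s)
    (carrier (semidirect_Zm_Z2 (2 * n))) (carrier (proper_group n))"
proof (rule bij_betw_imageI)
  have n: "n > 0"
    using assms by simp
  show "inj_on (\<lambda>(a, s). proper_dihedral n a s) (carrier (semidirect_Zm_Z2 (2 * n)))"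
  proof (rule inj_onI)
    fix x y
    assume "x \<in> carrier (semidirect_Zm_Z2 (2 * n))" "y \<in> carrier (semidirect_Zm_Z2 (2 * n))"
      and eq: "(\<lambda>(a, s). proper_dihedral n a s) x = (\<lambda>(a, s). proper_dihedral n a s) y"
    then obtain a s b t where xy: "x = (a, s)" "y = (b, t)"
      and range: "a \<in> {0..<2 * int n}" "b \<in> {0..<2 * int n}" "s \<in> {0, 1}" "t \<in> {0, 1}"
      unfolding carrier_semidirect_Zm_Z2 by auto
    have "a = b \<and> s = t"
      using eq unfolding xy by (intro proper_dihedral_inject[OF assms range]) simp
    then show "x = y"
      unfolding xy by simp
  qed
  show "(\<lambda>(a, s). proper_dihedral n a s) ` carrier (semidirect_Zm_Z2 (2 * n)) = carrier (proper_group n)"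
  proof
    show "(\<lambda>(a, s). proper_dihedral n a s) ` carrier (semidirect_Zm_Z2 (2 * n)) \<subseteq> carrier (proper_group n)"
      using hom_proper_dihedral[OF n] unfolding hom_def Pi_def by blast
    show "carrier (proper_group n) \<subseteq> (\<lambda>(a, s). proper_dihedral n a s) ` carrier (semidirect_Zm_Z2 (2 * n))"
    proof
      fix \<theta> assume "\<theta> \<in> carrier (proper_group n)"
      then have "\<theta> \<in> proper_bijections n"
        by (simp add: proper_group_def)
      then obtain a s where "a \<in> {0..<2 * int n}" "s \<in> {0, 1}" "\<theta> = proper_dihedral n a s"
        by (rule proper_bijection_is_dihedral[OF n])
      then show "\<theta> \<in> (\<lambda>(a, s). proper_dihedral n a s) ` carrier (semidirect_Zm_Z2 (2 * n))"
        unfolding carrier_semidirect_Zm_Z2 by (intro image_eqI[of _ _ "(a, s)"]) auto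
    qed
  qed
qed

theorem proposition4p11:
  fixes n :: nat
  assumes "n \<ge> 2"
  shows "proper_group n \<cong> semidirect_Zm_Z2 (2 * n)"
proof -
  have "group (semidirect_Zm_Z2 (2 * n))"
    using assms by (intro group_semidirect_Zm_Z2) simp
  moreover have "(\<lambda>(a, s). proper_dihedral n a s) \<in> iso (semidirect_Zm_Z2 (2 * n)) (proper_group n)"
    using hom_proper_dihedral bij_betw_proper_dihedral[OF assms] assms by (intro isoI) simp_all
  ultimately show ?thesis
    using group.iso_set_sym is_isoI by blast
qed

end
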